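(* The Wachspress quadrics $(I_{W_d})_2$ are those elements of $S_2$ which are diagonally supported and vanish on $\mathcal{C}$. The quadrics $Q_k=\Lambda_k\cdot \tau$ for $k=1,\dots,d$ span $(I_{W_d})_2$.
   Context: Let $P_d$ be a convex polygon with $d\ge 4$ vertices $v_1,\dots,v_d$ (indices mod $d$) over a field $\mathbb{K}$ with no three edge lines concurrent. Set ${\bf v}_i=(v_i,1)$, ${\bf n}_i={\bf v}_i\times{\bf v}_{i+1}$, $\alpha_j=|{\bf v}_{j-1}\,{\bf v}_j\,{\bf v}_{j+1}|$, $\ell_j=|{\bf v}_j\,{\bf v}_{j+1}\,{\bf p}|$, $b_i=\alpha_i\prod_{j\ne i-1,i}\ell_j$; $W_d\subseteq\mathbb{P}^{d-1}$ is the closure of the image of $p\mapsto(b_1,\dots,b_d)$ with ideal $I_{W_d}\subseteq S=\mathbb{K}[x_1,\ldots,x_d]$. Let $\tau=\sum_i x_i{\bf v}_i\in S_1^3$, $\mathcal{C}=\mathbb{V}(\tau_1,\tau_2,\tau_3)$ the center of the projection $\tau$, and $\Lambda_k=\frac{x_{k+1}}{\alpha_{k+1}}{\bf n}_{k+1}-\frac{x_k}{\alpha_k}{\bf n}_{k-1}$. A quadric is diagonally supported if it is a linear combination of monomials $x_ix_j$ with $j\notin\{i-1,i,i+1\}$. *)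

theory Defs
  imports Main
begin

text \<open>Points of the plane are pairs; homogeneous vectors in K^3 are triples.
  Polygon vertices are indexed 0..d-1 (cyclically, mod d).\<close>

type_synonym 'a vec3 = "'a \<times> 'a \<times> 'a"

definition hom :: "'a::field \<times> 'a \<Rightarrow> 'a vec3" where
  "hom p = (fst p, snd p, 1)"

fun comp3 :: "'a vec3 \<Rightarrow> nat \<Rightarrow> 'a" where
  "comp3 (a1, a2, a3) m = (if m = 0 then a1 else if m = 1 then a2 else a3)"

fun cross3 :: "'a::comm_ring vec3 \<Rightarrow> 'a vec3 \<Rightarrow> 'a vec3" where
  "cross3 (a1, a2, a3) (b1, b2, b3) =
     (a2 * b3 - a3 * b2, a3 * b1 - a1 * b3, a1 * b2 - a2 * b1)"

fun dot3 :: "'a::comm_ring vec3 \<Rightarrow> 'a vec3 \<Rightarrow> 'a" where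
  "dot3 (a1, a2, a3) (b1, b2, b3) = a1 * b1 + a2 * b2 + a3 * b3"

definition det3 :: "'a::comm_ring vec3 \<Rightarrow> 'a vec3 \<Rightarrow> 'a vec3 \<Rightarrow> 'a" where
  "det3 a b c = dot3 a (cross3 b c)"

definition vv :: "nat \<Rightarrow> (nat \<Rightarrow> 'a::field \<times> 'a) \<Rightarrow> nat \<Rightarrow> 'a vec3" where
  "vv d v i = hom (v (i mod d))"

definition prev :: "nat \<Rightarrow> nat \<Rightarrow> nat" where
  "prev d i = (i + d - 1) mod d"

definition nvec :: "nat \<Rightarrow> (nat \<Rightarrow> 'a::field \<times> 'a) \<Rightarrow> nat \<Rightarrow> 'a vec3" where
  "nvec d v i = cross3 (vv d v i) (vv d v (i + 1))"

definition alpha :: "nat \<Rightarrow> (nat \<Rightarrow> 'a::field \<times> 'a) \<Rightarrow> nat \<Rightarrow> 'a" where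
  "alpha d v j = det3 (vv d v (prev d j)) (vv d v j) (vv d v (j + 1))"

definition ell :: "nat \<Rightarrow> (nat \<Rightarrow> 'a::field \<times> 'a) \<Rightarrow> nat \<Rightarrow> 'a \<times> 'a \<Rightarrow> 'a" where
  "ell d v j p = det3 (vv d v j) (vv d v (j + 1)) (hom p)"

definition bcoord :: "nat \<Rightarrow> (nat \<Rightarrow> 'a::field \<times> 'a) \<Rightarrow> nat \<Rightarrow> 'a \<times> 'a \<Rightarrow> 'a" where
  "bcoord d v i p = alpha d v i * (\<Prod>j \<in> {0..<d} - {prev d i, i mod d}. ell d v j p)"

text \<open>Convex polygon (strictly convex, either orientation): for every edge
  v_i v_{i+1}, all other vertices lie strictly on the same side, with a
  common orientation sign s.\<close>
definition convex_polygon :: "nat \<Rightarrow> (nat \<Rightarrow> 'a::linordered_field \<times> 'a) \<Rightarrow> bool" where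
  "convex_polygon d v \<longleftrightarrow> (\<exists>s::'a. (s = 1 \<or> s = -1) \<and>
     (\<forall>i<d. \<forall>j<d. j \<noteq> i \<and> j \<noteq> (i + 1) mod d \<longrightarrow>
        s * det3 (vv d v i) (vv d v (i + 1)) (vv d v j) > 0))"

text \<open>No three (distinct) edge lines are concurrent (projectively).\<close>
definition no_three_concurrent :: "nat \<Rightarrow> (nat \<Rightarrow> 'a::field \<times> 'a) \<Rightarrow> bool" where
  "no_three_concurrent d v \<longleftrightarrow> (\<forall>i<d. \<forall>j<d. \<forall>k<d.
     i \<noteq> j \<and> j \<noteq> k \<and> i \<noteq> k \<longrightarrow> det3 (nvec d v i) (nvec d v j) (nvec d v k) \<noteq> 0)"

text \<open>Quadrics in S_2 = K[x_0..x_{d-1}]_2: coefficient c i j of the monomial x_i x_j,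
  stored for i \<le> j < d only (zero elsewhere).\<close>
definition S2 :: "nat \<Rightarrow> (nat \<Rightarrow> nat \<Rightarrow> 'a::field) set" where
  "S2 d = {c. \<forall>i j. c i j \<noteq> 0 \<longrightarrow> i \<le> j \<and> j < d}"

definition qeval :: "nat \<Rightarrow> (nat \<Rightarrow> nat \<Rightarrow> 'a::field) \<Rightarrow> (nat \<Rightarrow> 'a) \<Rightarrow> 'a" where
  "qeval d c x = (\<Sum>i<d. \<Sum>j<d. c i j * x i * x j)"

definition linmul :: "nat \<Rightarrow> (nat \<Rightarrow> 'a::field) \<Rightarrow> (nat \<Rightarrow> 'a) \<Rightarrow> nat \<Rightarrow> nat \<Rightarrow> 'a" where
  "linmul d a b i j = (if j < d \<and> i < j then a i * b j + a j * b i
                       else if j < d \<and> i = j then a i * b i else 0)"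

text \<open>Degree-2 part of the ideal of W_d: quadrics vanishing on the image of p \<mapsto> b(p).\<close>
definition IW2 :: "nat \<Rightarrow> (nat \<Rightarrow> 'a::field \<times> 'a) \<Rightarrow> (nat \<Rightarrow> nat \<Rightarrow> 'a) set" where
  "IW2 d v = {c \<in> S2 d. \<forall>p. qeval d c (\<lambda>i. bcoord d v i p) = 0}"

definition tau :: "nat \<Rightarrow> (nat \<Rightarrow> 'a::field \<times> 'a) \<Rightarrow> nat \<Rightarrow> nat \<Rightarrow> 'a" where
  "tau d v m i = (if i < d then comp3 (vv d v i) m else 0)"

definition center :: "nat \<Rightarrow> (nat \<Rightarrow> 'a::field \<times> 'a) \<Rightarrow> (nat \<Rightarrow> 'a) set" where
  "center d v = {x. \<forall>m<3. (\<Sum>i<d. tau d v m i * x i) = 0}"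

definition vanishes_on_center :: "nat \<Rightarrow> (nat \<Rightarrow> 'a::field \<times> 'a) \<Rightarrow> (nat \<Rightarrow> nat \<Rightarrow> 'a) \<Rightarrow> bool" where
  "vanishes_on_center d v c \<longleftrightarrow> (\<forall>x \<in> center d v. qeval d c x = 0)"

definition diag_supported :: "nat \<Rightarrow> (nat \<Rightarrow> nat \<Rightarrow> 'a::field) \<Rightarrow> bool" where
  "diag_supported d c \<longleftrightarrow> (\<forall>i<d. \<forall>j<d.
     (j = prev d i \<or> j = i \<or> j = (i + 1) mod d) \<longrightarrow> c i j = 0)"

definition Lam :: "nat \<Rightarrow> (nat \<Rightarrow> 'a::field \<times> 'a) \<Rightarrow> nat \<Rightarrow> nat \<Rightarrow> nat \<Rightarrow> 'a" where
  "Lam d v k m i =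
     (if i = (k + 1) mod d then comp3 (nvec d v (k + 1)) m / alpha d v (k + 1) else 0)
   - (if i = k mod d then comp3 (nvec d v (prev d k)) m / alpha d v k else 0)"

definition Qk :: "nat \<Rightarrow> (nat \<Rightarrow> 'a::field \<times> 'a) \<Rightarrow> nat \<Rightarrow> nat \<Rightarrow> nat \<Rightarrow> 'a" where
  "Qk d v k = (\<lambda>i j. \<Sum>m<3. linmul d (Lam d v k m) (tau d v m) i j)"

end

theory Submission
  imports Defs "HOL-Computational_Algebra.Polynomial"
begin

text \<open>Each \<open>Q\<^sub>k = \<Lambda>\<^sub>k \<cdot> \<tau>\<close> vanishes on the center because \<open>\<tau>\<close> does, and on \<open>W\<^sub>d\<close> because
  \<open>\<tau>(b(p))\<close> is a multiple of \<open>p\<close> while \<open>\<Lambda>\<^sub>k(b(p)) \<cdot> p = 0\<close>; its coefficients at \<open>x\<^sub>i\<^sup>2\<close> and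
  \<open>x\<^sub>ix\<^sub>i\<^sub>+\<^sub>1\<close> cancel. Conversely, evaluating at vertices and edge midpoints shows that
  Wachspress quadrics are diagonally supported. For nonadjacent edges \<open>i\<close>, \<open>k\<close> a diagonally
  supported quadric then satisfies one linear relation (its pair form) among its four
  coefficients linking \<open>{i, i+1}\<close> with \<open>{k, k+1}\<close>: for Wachspress quadrics by restricting to
  a line through the meet \<open>P\<close> of the edge lines \<open>i\<close>, \<open>k\<close> and comparing the lowest order terms at
  \<open>P\<close>, and for quadrics vanishing on the center by evaluating at a point of the center supported
  on the two edges. After subtracting the combination of the \<open>Q\<^sub>k\<close> that matches row \<open>0\<close>, the
  pair forms propagate the vanishing from row to row, so the difference is zero.\<close>

definition add3 :: "'a::comm_ring vec3 \<Rightarrow> 'a vec3 \<Rightarrow> 'a vec3" where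
  "add3 x y = (fst x + fst y, fst (snd x) + fst (snd y), snd (snd x) + snd (snd y))"

definition scale3 :: "'a::comm_ring \<Rightarrow> 'a vec3 \<Rightarrow> 'a vec3" where
  "scale3 t x = (t * fst x, t * fst (snd x), t * snd (snd x))"

lemma comp3_0: "comp3 x 0 = fst x"
  and comp3_1: "comp3 x 1 = fst (snd x)"
  and comp3_Suc_0: "comp3 x (Suc 0) = fst (snd x)"
  and comp3_2: "comp3 x 2 = snd (snd x)"
  by (cases x; simp)+

lemma comp3_all_zero_iff: "(\<forall>m<3. comp3 y m = 0) \<longleftrightarrow> y = (0, 0, 0)"
  by (cases y) (auto simp: numeral_3_eq_3 less_Suc_eq)

lemma comp3_add3: "comp3 (add3 x y) m = comp3 x m + comp3 y m"
  by (cases x; cases y) (simp add: add3_def)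

lemma comp3_scale3: "comp3 (scale3 t x) m = t * comp3 x m"
  by (cases x) (simp add: scale3_def)

lemma scale3_scale3: "scale3 s (scale3 t x) = scale3 (s * t) (x::'a::comm_ring vec3)"
  by (cases x) (simp add: scale3_def algebra_simps)

lemma scale3_add3: "scale3 s (add3 x y) = add3 (scale3 s x) (scale3 s (y::'a::comm_ring vec3))"
  by (cases x; cases y) (simp add: scale3_def add3_def algebra_simps)

lemma dot3_add3_left: "dot3 (add3 x y) w = dot3 x w + dot3 y (w::'a::comm_ring vec3)"
  by (cases x; cases y; cases w) (simp add: add3_def algebra_simps)

lemma dot3_scale3_left: "dot3 (scale3 t x) w = t * dot3 x (w::'a::comm_ring vec3)"
  by (cases x; cases w) (simp add: scale3_def algebra_simps)

lemma dot3_scale3_right: "dot3 w (scale3 t x) = t * dot3 w (x::'a::comm_ring vec3)"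
  by (cases x; cases w) (simp add: scale3_def algebra_simps)

lemma cross3_scale3_left: "cross3 (scale3 t x) y = scale3 t (cross3 x (y::'a::comm_ring vec3))"
  by (cases x; cases y) (simp add: scale3_def algebra_simps)

lemma cross3_commute_neg: "cross3 x y = cross3 y (scale3 (-1) (x::'a::comm_ring_1 vec3))"
  by (cases x; cases y) (simp add: scale3_def algebra_simps)

lemma dot3_cross3: "dot3 (cross3 a b) c = det3 a b (c::'a::comm_ring vec3)"
  by (cases a; cases b; cases c) (simp add: det3_def algebra_simps)

lemma det3_rotate: "det3 a b c = det3 b c (a::'a::comm_ring vec3)"
  by (cases a; cases b; cases c) (simp add: det3_def algebra_simps)

lemma det3_same_12: "det3 a a (c::'a::comm_ring vec3) = 0"
  and det3_same_23: "det3 a b b = 0"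
  and det3_same_13: "det3 a b a = 0"
  by (cases a; cases b; cases c; simp add: det3_def algebra_simps)+

lemma det3_add3_right: "det3 a b (add3 x y) = det3 a b x + det3 a b (y::'a::comm_ring vec3)"
  by (cases a; cases b; cases x; cases y) (simp add: det3_def add3_def algebra_simps)

lemma det3_scale3_right: "det3 a b (scale3 t x) = t * det3 a b (x::'a::comm_ring vec3)"
  by (cases a; cases b; cases x) (simp add: det3_def scale3_def algebra_simps)

lemma cross3_cross3:
  "cross3 (cross3 a b) w = add3 (scale3 (dot3 a w) b) (scale3 (- dot3 b w) (a::'a::comm_ring vec3))"
  by (cases a; cases b; cases w) (simp add: add3_def scale3_def algebra_simps)

lemma cross3_cross3_common:
  "cross3 (cross3 a b) (cross3 b c) = scale3 (det3 a b c) (b::'a::comm_ring vec3)"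
  by (cases a; cases b; cases c) (simp add: scale3_def det3_def algebra_simps)

text \<open>\<open>(B \<times> C) \<times> w\<close> lies on the line \<open>BC\<close>; its coordinates in the basis \<open>B, C\<close>.\<close>
lemma point_on_line_expansion:
  fixes A B C E w :: "'a::comm_ring vec3"
  assumes P: "P = cross3 (cross3 B C) w"
  shows "add3 (scale3 (det3 A B C * det3 C E P) B) (scale3 (det3 B C E * det3 A B P) C)
       = scale3 (det3 A B C * det3 B C E) P"
proof -
  have P': "P = add3 (scale3 (dot3 B w) C) (scale3 (- dot3 C w) B)"
    using P by (simp add: cross3_cross3)
  have "det3 C E P = - dot3 C w * det3 B C E"
    by (simp add: P' det3_add3_right det3_scale3_right det3_same_13
        det3_rotate[of C E B] det3_rotate[of E B C])
  moreover have "det3 A B P = dot3 B w * det3 A B C"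
    by (simp add: P' det3_add3_right det3_scale3_right det3_same_23)
  ultimately show ?thesis
    by (cases B; cases C) (simp add: P' add3_def scale3_def algebra_simps)
qed

lemma sum_lessThan_3: "(\<Sum>m<3. f m) = f 0 + f 1 + (f (2::nat) :: 'a::comm_monoid_add)"
  by (simp add: eval_nat_numeral lessThan_Suc add.commute add.left_commute)

lemma sum_comp3_mult: "(\<Sum>m<3. comp3 x m * comp3 y m) = dot3 x (y::'a::comm_ring vec3)"
  by (cases x; cases y) (simp add: sum_lessThan_3)

lemma sum_comp3_div_mult: "(\<Sum>m<3. comp3 n m / a * comp3 w m) = dot3 n w / (a::'a::field)"
  by (cases n; cases w) (simp add: sum_lessThan_3 add_divide_distrib)


lemma qeval_cong: "(\<And>j. j < d \<Longrightarrow> x j = y j) \<Longrightarrow> qeval d c x = qeval d c y"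
  by (simp add: qeval_def)

lemma qeval_scale: "qeval d c (\<lambda>j. t * x j) = t * t * qeval d c x"
  by (simp add: qeval_def sum_distrib_left algebra_simps)

lemma qeval_sum_coeffs: "qeval d (\<lambda>i j. \<Sum>k\<in>K. f k i j) x = (\<Sum>k\<in>K. qeval d (f k) x)"
  by (simp add: qeval_def sum_distrib_right sum.swap[of _ K])

lemma qeval_scale_coeffs: "qeval d (\<lambda>i j. t * c i j) x = t * qeval d c x"
  by (simp add: qeval_def sum_distrib_left algebra_simps)

definition qpolar :: "nat \<Rightarrow> (nat \<Rightarrow> nat \<Rightarrow> 'a::field) \<Rightarrow> (nat \<Rightarrow> 'a) \<Rightarrow> (nat \<Rightarrow> 'a) \<Rightarrow> 'a" where
  "qpolar d c x y = (\<Sum>i<d. \<Sum>j<d. c i j * (x i * y j + y i * x j))"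

lemma qeval_add: "qeval d c (\<lambda>j. x j + y j) = qeval d c x + qeval d c y + qpolar d c x y"
  by (simp add: qeval_def qpolar_def sum.distrib[symmetric] algebra_simps)

lemma sum_support:
  fixes d :: nat
  assumes "A \<subseteq> {..<d}" "\<And>j. j < d \<Longrightarrow> j \<notin> A \<Longrightarrow> f j = 0"
  shows "(\<Sum>j<d. f j) = (\<Sum>j\<in>A. f j)"
  by (rule sum.mono_neutral_right) (use assms in auto)

lemma qeval_support:
  assumes A: "A \<subseteq> {..<d}" and x: "\<And>j. j < d \<Longrightarrow> j \<notin> A \<Longrightarrow> x j = 0"
  shows "qeval d c x = (\<Sum>i\<in>A. \<Sum>j\<in>A. c i j * x i * x j)"
  unfolding qeval_def
  by (subst sum_support[OF A], use x in simp, intro sum.cong refl sum_support[OF A]) (use x in simp)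

lemma qeval_support_single:
  "i < d \<Longrightarrow> (\<And>j. j < d \<Longrightarrow> j \<noteq> i \<Longrightarrow> x j = 0) \<Longrightarrow> qeval d c x = c i i * x i * x i"
  using qeval_support[of "{i}" d x c] by simp

lemma qeval_support_pair:
  "a < d \<Longrightarrow> b < d \<Longrightarrow> a \<noteq> b \<Longrightarrow> (\<And>j. j < d \<Longrightarrow> j \<noteq> a \<Longrightarrow> j \<noteq> b \<Longrightarrow> x j = 0) \<Longrightarrow>
   qeval d c x = c a a * x a * x a + c b b * x b * x b + (c a b + c b a) * x a * x b"
  using qeval_support[of "{a,b}" d x c] by (simp add: algebra_simps)

lemma qpolar_support:
  assumes A: "A \<subseteq> {..<d}" and B: "B \<subseteq> {..<d}"
    and x: "\<And>j. j < d \<Longrightarrow> j \<notin> A \<Longrightarrow> x j = 0" and y: "\<And>j. j < d \<Longrightarrow> j \<notin> B \<Longrightarrow> y j = 0"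
  shows "qpolar d c x y = (\<Sum>i\<in>A. \<Sum>j\<in>B. (c i j + c j i) * x i * y j)"
proof -
  have xy: "(\<Sum>i<d. \<Sum>j<d. c i j * x i * y j) = (\<Sum>i\<in>A. \<Sum>j\<in>B. c i j * x i * y j)"
    by (subst sum_support[OF A], use x in simp, intro sum.cong refl sum_support[OF B]) (use y in simp)
  have yx: "(\<Sum>i<d. \<Sum>j<d. c i j * y i * x j) = (\<Sum>i\<in>B. \<Sum>j\<in>A. c i j * y i * x j)"
    by (subst sum_support[OF B], use y in simp, intro sum.cong refl sum_support[OF A]) (use x in simp)
  have "qpolar d c x y = (\<Sum>i<d. \<Sum>j<d. c i j * x i * y j) + (\<Sum>i<d. \<Sum>j<d. c i j * y i * x j)"
    by (simp add: qpolar_def sum.distrib[symmetric] algebra_simps)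
  also have "\<dots> = (\<Sum>i\<in>A. \<Sum>j\<in>B. c i j * x i * y j) + (\<Sum>j\<in>A. \<Sum>i\<in>B. c i j * y i * x j)"
    unfolding xy yx by (simp add: sum.swap[of _ B])
  also have "\<dots> = (\<Sum>i\<in>A. \<Sum>j\<in>B. (c i j + c j i) * x i * y j)"
    by (simp add: sum.distrib[symmetric] algebra_simps)
  finally show ?thesis .
qed

lemma qeval_linmul: "qeval d (linmul d a b) x = (\<Sum>i<d. a i * x i) * (\<Sum>j<d. b j * x j)"
proof -
  define f where "f i j = a i * b j * x i * x j" for i j
  have "qeval d (linmul d a b) x = (\<Sum>i<d. \<Sum>j<d. (if i < j then f i j else 0)
      + (if i < j then f j i else 0) + (if i = j then f i j else 0))"
    unfolding qeval_def by (intro sum.cong refl) (auto simp: linmul_def f_def algebra_simps)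
  also have "\<dots> = (\<Sum>i<d. \<Sum>j<d. (if i < j then f i j else 0)) + (\<Sum>i<d. \<Sum>j<d. (if j < i then f i j else 0))
      + (\<Sum>i<d. \<Sum>j<d. (if i = j then f i j else 0))"
    by (simp add: sum.distrib sum.swap[of "\<lambda>i j. if i < j then f j i else 0"])
  also have "\<dots> = (\<Sum>i<d. \<Sum>j<d. (if i < j then f i j else 0) + (if j < i then f i j else 0)
      + (if i = j then f i j else 0))"
    by (simp only: sum.distrib)
  also have "\<dots> = (\<Sum>i<d. \<Sum>j<d. f i j)"
    by (intro sum.cong refl) auto
  also have "\<dots> = (\<Sum>i<d. a i * x i) * (\<Sum>j<d. b j * x j)"
    by (simp add: f_def sum_product algebra_simps)
  finally show ?thesis .
qed

lemma S2_below_diagonal: "c \<in> S2 d \<Longrightarrow> b < a \<Longrightarrow> c a b = 0"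
  unfolding S2_def by force

lemma S2_diff:
  assumes "c \<in> S2 d" "e \<in> S2 d"
  shows "(\<lambda>a b. c a b - e a b) \<in> S2 d"
  unfolding S2_def mem_Collect_eq
proof (intro allI impI)
  fix a b assume "c a b - e a b \<noteq> 0"
  then have "c a b \<noteq> 0 \<or> e a b \<noteq> 0" by auto
  then show "a \<le> b \<and> b < d" using assms unfolding S2_def by blast
qed

lemma S2_coeff_pair_zero:
  assumes "c \<in> S2 d" "a \<noteq> b" "c a b + c b a = 0"
  shows "c a b = 0" "c b a = 0"
  using assms S2_below_diagonal[OF assms(1), of a b] S2_below_diagonal[OF assms(1), of b a]
  by (cases "a < b"; simp)+

lemma poly_eq_0_if_cofinite_roots:
  fixes q :: "'a::{field_char_0} poly"
  assumes "\<And>e. e \<noteq> 0 \<Longrightarrow> e \<noteq> r \<Longrightarrow> poly q e = 0"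
  shows "q = 0"
proof (rule ccontr)
  assume "q \<noteq> 0"
  then have "finite {x. poly q x = 0}" by (rule poly_roots_finite)
  moreover have "UNIV - {0, r} \<subseteq> {x. poly q x = 0}" using assms by auto
  ultimately have "finite (UNIV - {0, r} :: 'a set)" using finite_subset by blast
  then show False using infinite_UNIV_char_0[where 'a='a] by simp
qed

lemma qeval_poly_at_0:
  fixes X :: "nat \<Rightarrow> 'a::field_char_0 poly"
  assumes "\<And>e. e \<noteq> 0 \<Longrightarrow> e \<noteq> r \<Longrightarrow> qeval d c (\<lambda>j. poly (X j) e) = 0"
  shows "qeval d c (\<lambda>j. poly (X j) 0) = 0"
proof -
  define q where "q = (\<Sum>a<d. \<Sum>b<d. smult (c a b) (X a * X b))"
  have q: "poly q e = qeval d c (\<lambda>j. poly (X j) e)" for e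
    by (simp add: q_def qeval_def poly_sum algebra_simps)
  have "q = 0" by (rule poly_eq_0_if_cofinite_roots[of r]) (simp add: q assms)
  then show ?thesis using q[of 0] by simp
qed


lemma mod_add_left_inj:
  fixes i x y n :: nat
  assumes "i < n" "x < n" "y < n" "(i + x) mod n = (i + y) mod n"
  shows "x = y"
proof -
  have h: "(i + z) mod n = (if i + z < n then i + z else i + z - n)" if "z < n" for z
  proof (cases "i + z < n")
    case False
    then have "i + z - n < n" using assms(1) that by arith
    then show ?thesis using False by (simp add: mod_if)
  qed simp
  show ?thesis using assms h[OF assms(2)] h[OF assms(3)] by (auto split: if_splits)
qed


locale wachspress_polygon =
  fixes d :: nat and v :: "nat \<Rightarrow> 'a::linordered_field \<times> 'a"
  assumes d_ge_4: "4 \<le> d" and convex: "convex_polygon d v"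
    and not_concurrent: "no_three_concurrent d v"
begin

abbreviation V where "V \<equiv> vv d v"
abbreviation nxt where "nxt i \<equiv> Suc i mod d"
abbreviation prv where "prv i \<equiv> prev d i"

definition ellh where "ellh m P = det3 (V m) (V (m + 1)) P"
abbreviation ellv where "ellv m j \<equiv> ellh m (V j)"

lemma d_pos: "0 < d" using d_ge_4 by simp

lemma V_cong: "i mod d = j mod d \<Longrightarrow> V i = V j" by (simp add: vv_def)
lemma V_mod: "V (i mod d) = V i" by (simp add: vv_def)
lemma V_Suc_mod: "V (Suc (i mod d)) = V (Suc i)" by (rule V_cong) (simp add: mod_Suc_eq)
lemma V_third: "snd (snd (V j)) = 1" by (simp add: vv_def hom_def)

lemma ellh_mod: "ellh (m mod d) P = ellh m P" by (simp add: ellh_def V_mod V_Suc_mod)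
lemma prev_mod: "prv (j mod d) = prv j"
  by (simp add: prev_def) (metis add_diff_assoc d_pos less_eq_Suc_le mod_add_left_eq)
lemma alpha_mod: "alpha d v (j mod d) = alpha d v j"
  by (simp add: alpha_def prev_mod V_mod V_Suc_mod)

lemma prev_eq: "i < d \<Longrightarrow> prv i = (if i = 0 then d - 1 else i - 1)"
  using d_pos by (cases i) (simp_all add: prev_def)

lemma nxt_eq: "i < d \<Longrightarrow> nxt i = (if i = d - 1 then 0 else i + 1)"
  by auto

lemma prv_less: "prv i < d" using d_pos by (simp add: prev_def)
lemma nxt_less: "nxt i < d" using d_pos by simp
lemma prv_neq: "i < d \<Longrightarrow> prv i \<noteq> i" using d_ge_4 by (auto simp: prev_eq)
lemma nxt_neq: "i < d \<Longrightarrow> nxt i \<noteq> i" using d_ge_4 by (simp add: nxt_eq)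
lemma nxt_prv: "i < d \<Longrightarrow> nxt (prv i) = i" using d_pos by (auto simp: prev_eq)
lemma prv_nxt: "i < d \<Longrightarrow> prv (nxt i) = i" using d_pos by (auto simp: prev_eq nxt_eq)
lemma nxt_neq_prv: "i < d \<Longrightarrow> nxt i \<noteq> prv i" using d_ge_4 by (auto simp: prev_eq nxt_eq)
lemma nxt_nxt_neq: "i < d \<Longrightarrow> nxt (nxt i) \<noteq> i" by (metis prv_nxt nxt_less nxt_neq_prv)
lemma nxt_inj: "i < d \<Longrightarrow> j < d \<Longrightarrow> nxt i = nxt j \<Longrightarrow> i = j" by (metis prv_nxt)
lemma prv_inj: "i < d \<Longrightarrow> j < d \<Longrightarrow> prv i = prv j \<Longrightarrow> i = j" by (metis nxt_prv)

lemma V_Suc_prv: "j < d \<Longrightarrow> V (Suc (prv j)) = V j"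
  by (metis V_cong nxt_prv mod_mod_trivial)

lemma sum_reindex_prv: "(\<Sum>j<d. f (prv j)) = (\<Sum>j<d. f j)"
  by (rule sum.reindex_bij_witness[where i = nxt and j = prv]) (auto simp: nxt_prv prv_nxt prv_less)

lemma alpha_eq_ellv: "alpha d v j = ellv j (prv j)"
  by (simp add: alpha_def ellh_def det3_rotate[of "V (prv j)"])

lemma ellv_eq_0:
  assumes "j mod d = i mod d \<or> j mod d = (i + 1) mod d"
  shows "ellv i j = 0"
proof -
  from assms have "V j = V i \<or> V j = V (i + 1)" using V_cong by blast
  then show ?thesis by (auto simp: ellh_def det3_same_13 det3_same_23)
qed

lemma convex_sign:
  obtains s :: 'a where "s \<noteq> 0"
    "\<And>i j. i < d \<Longrightarrow> j < d \<Longrightarrow> j \<noteq> i \<Longrightarrow> j \<noteq> nxt i \<Longrightarrow> s * ellv i j > 0"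
proof -
  from convex obtain s :: 'a where "s = 1 \<or> s = -1"
    "\<forall>i<d. \<forall>j<d. j \<noteq> i \<and> j \<noteq> (i + 1) mod d \<longrightarrow> s * ellv i j > 0"
    unfolding convex_polygon_def ellh_def by blast
  then show thesis using that[of s] by auto
qed

lemma ellv_nonzero:
  assumes "i < d" "j < d" "j \<noteq> i" "j \<noteq> nxt i"
  shows "ellv i j \<noteq> 0"
proof -
  obtain s where "s \<noteq> 0"
    and pos: "\<And>i j. i < d \<Longrightarrow> j < d \<Longrightarrow> j \<noteq> i \<Longrightarrow> j \<noteq> nxt i \<Longrightarrow> s * ellv i j > 0"
    using convex_sign by blast
  from pos[OF assms] show ?thesis by auto
qed

lemma ellv_eq_0_iff: "i < d \<Longrightarrow> j < d \<Longrightarrow> ellv i j = 0 \<longleftrightarrow> j = i \<or> j = nxt i"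
  using ellv_nonzero[of i j] ellv_eq_0[of j i] by auto

lemma alpha_nonzero: "alpha d v j \<noteq> 0"
proof -
  have j: "j mod d < d" using d_pos by simp
  have "alpha d v j = ellv (j mod d) (prv (j mod d))"
    using alpha_mod[of j] alpha_eq_ellv[of "j mod d"] by simp
  also have "\<dots> \<noteq> 0"
    by (rule ellv_nonzero[OF j prv_less prv_neq[OF j] nxt_neq_prv[OF j, symmetric]])
  finally show ?thesis .
qed

lemma ellv_Suc_self: "k < d \<Longrightarrow> ellv (Suc k) k = alpha d v (Suc k)"
proof -
  assume k: "k < d"
  have "prv (Suc k) = k" using prev_mod[of "Suc k"] prv_nxt[OF k] by simp
  then show ?thesis by (simp add: ellh_def alpha_def det3_rotate[of "V k"])
qed

lemma ellv_prv_nxt: "k < d \<Longrightarrow> ellv (prv k) (nxt k) = alpha d v k"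
  by (simp add: ellh_def alpha_def V_Suc_prv V_mod)

lemma edge_normals_independent:
  "i < d \<Longrightarrow> j < d \<Longrightarrow> k < d \<Longrightarrow> i \<noteq> j \<Longrightarrow> j \<noteq> k \<Longrightarrow> i \<noteq> k \<Longrightarrow>
   det3 (nvec d v i) (nvec d v j) (nvec d v k) \<noteq> 0"
  using not_concurrent unfolding no_three_concurrent_def by blast

lemma ellh_eq_dot3: "ellh m P = dot3 (nvec d v m) P"
  by (simp add: ellh_def nvec_def dot3_cross3)

lemma ell_eq_ellh: "ell d v m p = ellh m (hom p)"
  by (simp add: ell_def ellh_def)

lemma ellh_add3: "ellh m (add3 P Q) = ellh m P + ellh m Q"
  by (simp add: ellh_def det3_add3_right)

lemma ellh_scale3: "ellh m (scale3 t P) = t * ellh m P"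
  by (simp add: ellh_def det3_scale3_right)

lemma hom_vertex: "i < d \<Longrightarrow> hom (v i) = V i"
  by (simp add: vv_def)

lemma alpha_cross3: "j < d \<Longrightarrow> scale3 (alpha d v j) (V j) = cross3 (nvec d v (prv j)) (nvec d v j)"
  by (simp add: nvec_def V_Suc_prv cross3_cross3_common alpha_def)


section \<open>The quadrics \<open>Q\<^sub>k\<close> are Wachspress quadrics\<close>

definition bfactors where "bfactors j = {0..<d} - {prv j, j}"

lemma bfactors_iff: "m \<in> bfactors j \<longleftrightarrow> m < d \<and> m \<noteq> prv j \<and> m \<noteq> j"
  by (auto simp: bfactors_def)

lemma finite_bfactors [simp]: "finite (bfactors j)"
  by (simp add: bfactors_def)

lemma bcoord_eq: "j < d \<Longrightarrow> bcoord d v j p = alpha d v j * (\<Prod>m\<in>bfactors j. ell d v m p)"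
  by (simp add: bcoord_def bfactors_def)

definition ell_prod_except where "ell_prod_except j p = (\<Prod>m\<in>{0..<d} - {j}. ell d v m p)"

lemma ell_prod_except_self: "j < d \<Longrightarrow>
  ell_prod_except j p = ell d v (prv j) p * (\<Prod>m\<in>bfactors j. ell d v m p)"
proof -
  assume j: "j < d"
  have "ell_prod_except j p = ell d v (prv j) p * (\<Prod>m\<in>{0..<d} - {j} - {prv j}. ell d v m p)"
    unfolding ell_prod_except_def by (rule prod.remove) (use prv_less prv_neq[OF j] in auto)
  also have "{0..<d} - {j} - {prv j} = bfactors j" by (auto simp: bfactors_def)
  finally show ?thesis .
qed

lemma ell_prod_except_prv: "j < d \<Longrightarrow>
  ell_prod_except (prv j) p = ell d v j p * (\<Prod>m\<in>bfactors j. ell d v m p)"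
proof -
  assume j: "j < d"
  have "ell_prod_except (prv j) p = ell d v j p * (\<Prod>m\<in>{0..<d} - {prv j} - {j}. ell d v m p)"
    unfolding ell_prod_except_def by (rule prod.remove) (use j prv_neq[OF j] in auto)
  also have "{0..<d} - {prv j} - {j} = bfactors j" by (auto simp: bfactors_def)
  finally show ?thesis .
qed

lemma bcoord_cross3: "j < d \<Longrightarrow>
  scale3 (bcoord d v j p) (cross3 (V j) (hom p)) =
  add3 (scale3 (ell_prod_except j p) (nvec d v j))
       (scale3 (- ell_prod_except (prv j) p) (nvec d v (prv j)))"
proof -
  assume j: "j < d"
  define G where "G = (\<Prod>m\<in>bfactors j. ell d v m p)"
  have "scale3 (bcoord d v j p) (cross3 (V j) (hom p))
      = scale3 G (cross3 (scale3 (alpha d v j) (V j)) (hom p))"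
    by (simp add: bcoord_eq[OF j] G_def cross3_scale3_left scale3_scale3 mult.commute)
  also have "\<dots> = scale3 G (add3 (scale3 (ell d v (prv j) p) (nvec d v j))
                                 (scale3 (- ell d v j p) (nvec d v (prv j))))"
    by (simp add: alpha_cross3[OF j] cross3_cross3 ell_eq_ellh ellh_eq_dot3)
  also have "\<dots> = add3 (scale3 (ell_prod_except j p) (nvec d v j))
                      (scale3 (- ell_prod_except (prv j) p) (nvec d v (prv j)))"
    by (simp add: scale3_add3 scale3_scale3 ell_prod_except_self[OF j]
        ell_prod_except_prv[OF j] G_def mult.commute)
  finally show ?thesis .
qed

text \<open>The sum telescopes.\<close>
lemma sum_bcoord_cross3: "(\<Sum>j<d. bcoord d v j p * comp3 (cross3 (V j) (hom p)) m) = 0"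
proof -
  have "(\<Sum>j<d. bcoord d v j p * comp3 (cross3 (V j) (hom p)) m)
      = (\<Sum>j<d. ell_prod_except j p * comp3 (nvec d v j) m
              - ell_prod_except (prv j) p * comp3 (nvec d v (prv j)) m)"
  proof (intro sum.cong refl)
    fix j assume "j \<in> {..<d}"
    then have "comp3 (scale3 (bcoord d v j p) (cross3 (V j) (hom p))) m
      = comp3 (add3 (scale3 (ell_prod_except j p) (nvec d v j))
          (scale3 (- ell_prod_except (prv j) p) (nvec d v (prv j)))) m"
      using bcoord_cross3 by simp
    then show "bcoord d v j p * comp3 (cross3 (V j) (hom p)) m
      = ell_prod_except j p * comp3 (nvec d v j) m
        - ell_prod_except (prv j) p * comp3 (nvec d v (prv j)) m"
      by (simp add: comp3_add3 comp3_scale3)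
  qed
  also have "\<dots> = 0"
    using sum_reindex_prv[of "\<lambda>j. ell_prod_except j p * comp3 (nvec d v j) m"]
    by (simp add: sum_subtractf)
  finally show ?thesis .
qed

definition tau_vec where
  "tau_vec x = ((\<Sum>j<d. fst (V j) * x j), (\<Sum>j<d. fst (snd (V j)) * x j), (\<Sum>j<d. snd (snd (V j)) * x j))"

lemma comp3_tau_vec: "m < 3 \<Longrightarrow> comp3 (tau_vec x) m = (\<Sum>j<d. tau d v m j * x j)"
proof -
  assume "m < 3"
  then consider "m = 0" | "m = 1" | "m = 2" by arith
  then show ?thesis by cases (simp_all add: tau_vec_def tau_def comp3_0 comp3_1 comp3_Suc_0 comp3_2)
qed

lemma tau_vec_eq_0_iff: "tau_vec x = (0, 0, 0) \<longleftrightarrow> x \<in> center d v"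
  unfolding center_def comp3_all_zero_iff[symmetric] by (auto simp: comp3_tau_vec)

lemma tau_vec_bcoord: "tau_vec (\<lambda>j. bcoord d v j p) = scale3 (\<Sum>j<d. bcoord d v j p) (hom p)"
proof -
  obtain px py where p: "p = (px, py)" by (cases p)
  have "comp3 (cross3 (V j) (hom p)) 0 = fst (snd (V j)) - py"
    and "comp3 (cross3 (V j) (hom p)) (Suc 0) = px - fst (V j)" for j
    using V_third[of j] by (cases "V j"; simp add: p hom_def)+
  with sum_bcoord_cross3[of p 0] sum_bcoord_cross3[of p "Suc 0"]
  have "(\<Sum>j<d. fst (snd (V j)) * bcoord d v j p) = py * (\<Sum>j<d. bcoord d v j p)"
    and "(\<Sum>j<d. fst (V j) * bcoord d v j p) = px * (\<Sum>j<d. bcoord d v j p)"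
    by (simp_all add: sum_subtractf sum_distrib_left algebra_simps)
  then show ?thesis by (simp add: tau_vec_def scale3_def hom_def p V_third mult.commute)
qed

definition Lambda_vec where
  "Lambda_vec k x = add3 (scale3 (x (nxt k) / alpha d v (k + 1)) (nvec d v (k + 1)))
                         (scale3 (- x (k mod d) / alpha d v k) (nvec d v (prv k)))"

lemma sum_Lam_mult: "(\<Sum>i<d. Lam d v k m i * x i) = comp3 (Lambda_vec k x) m"
proof -
  have "Lam d v k m i * x i =
      (if i = nxt k then comp3 (nvec d v (k + 1)) m / alpha d v (k + 1) * x i else 0)
    - (if i = k mod d then comp3 (nvec d v (prv k)) m / alpha d v k * x i else 0)" for i
    by (simp add: Lam_def algebra_simps)
  then have "(\<Sum>i<d. Lam d v k m i * x i) =
     (\<Sum>i<d. if i = nxt k then comp3 (nvec d v (k + 1)) m / alpha d v (k + 1) * x i else 0)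
   - (\<Sum>i<d. if i = k mod d then comp3 (nvec d v (prv k)) m / alpha d v k * x i else 0)"
    by (simp only: sum_subtractf)
  also have "\<dots> = comp3 (nvec d v (k + 1)) m / alpha d v (k + 1) * x (nxt k)
                 - comp3 (nvec d v (prv k)) m / alpha d v k * x (k mod d)"
    using d_pos by (simp add: sum.delta)
  finally show ?thesis by (simp add: Lambda_vec_def comp3_add3 comp3_scale3 algebra_simps)
qed

lemma qeval_Qk: "qeval d (Qk d v k) x = dot3 (Lambda_vec k x) (tau_vec x)"
proof -
  have "qeval d (Qk d v k) x = (\<Sum>m<3. qeval d (linmul d (Lam d v k m) (tau d v m)) x)"
    unfolding Qk_def by (rule qeval_sum_coeffs)
  also have "\<dots> = (\<Sum>m<3. comp3 (Lambda_vec k x) m * comp3 (tau_vec x) m)"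
    by (intro sum.cong refl) (simp add: qeval_linmul sum_Lam_mult comp3_tau_vec)
  finally show ?thesis by (simp add: sum_comp3_mult)
qed

lemma Qk_vanishes_on_center: "x \<in> center d v \<Longrightarrow> qeval d (Qk d v k) x = 0"
  by (cases "Lambda_vec k x") (simp add: qeval_Qk tau_vec_eq_0_iff[symmetric])

text \<open>On the image, \<open>\<tau>(b(p))\<close> is a multiple of \<open>p\<close>, and \<open>\<Lambda>\<^sub>k(b(p)) \<cdot> p = 0\<close> because both terms
  equal \<open>\<Prod>\<^sub>m\<^sub>\<noteq>\<^sub>k \<ell>\<^sub>m(p)\<close>.\<close>
lemma Qk_vanishes_on_image: "k < d \<Longrightarrow> qeval d (Qk d v k) (\<lambda>j. bcoord d v j p) = 0"
proof -
  assume k: "k < d"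
  have alpha_nxt: "alpha d v (nxt k) = alpha d v (k + 1)" using alpha_mod[of "Suc k"] by simp
  have ell_nxt: "ell d v (Suc k) p = ell d v (nxt k) p"
    by (simp add: ell_eq_ellh ellh_mod[of "Suc k"])
  have "bcoord d v (nxt k) p / alpha d v (k + 1) * ell d v (k + 1) p = ell_prod_except k p"
    using bcoord_eq[OF nxt_less, of k p] ell_prod_except_prv[OF nxt_less, of k p] alpha_nonzero[of "k + 1"]
    by (simp add: prv_nxt[OF k] alpha_nxt ell_nxt)
  moreover have "bcoord d v (k mod d) p / alpha d v k * ell d v (prv k) p = ell_prod_except k p"
    using bcoord_eq[OF k, of p] ell_prod_except_self[OF k, of p] alpha_nonzero[of k] k by simp
  ultimately have "dot3 (Lambda_vec k (\<lambda>j. bcoord d v j p)) (hom p) = 0"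
    by (simp add: Lambda_vec_def dot3_add3_left dot3_scale3_left ellh_eq_dot3[symmetric]
        ell_eq_ellh[symmetric])
  then show ?thesis by (simp add: qeval_Qk tau_vec_bcoord dot3_scale3_right)
qed

text \<open>\<open>Lam_coeff k a b\<close> is \<open>\<Lambda>\<^sub>k\<close>'s coefficient of \<open>x\<^sub>a\<close>, dotted with \<open>v\<^sub>b\<close>.\<close>
definition Lam_coeff where
  "Lam_coeff k a b = (if a = nxt k then ellv (k + 1) b / alpha d v (k + 1) else 0)
                   - (if a = k mod d then ellv (prv k) b / alpha d v k else 0)"

lemma sum_Lam_mult_V: "(\<Sum>m<3. Lam d v k m a * comp3 (V b) m) = Lam_coeff k a b"
proof -
  have "(\<Sum>m<3. Lam d v k m a * comp3 (V b) m) =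
      (if a = nxt k then (\<Sum>m<3. comp3 (nvec d v (k + 1)) m / alpha d v (k + 1) * comp3 (V b) m) else 0)
    - (if a = k mod d then (\<Sum>m<3. comp3 (nvec d v (prv k)) m / alpha d v k * comp3 (V b) m) else 0)"
    by (simp add: Lam_def sum_lessThan_3 algebra_simps)
  then show ?thesis
    by (simp only: sum_comp3_div_mult ellh_eq_dot3[symmetric] Lam_coeff_def)
qed

lemma Qk_coeff: "Qk d v k a b = (if a < b \<and> b < d then Lam_coeff k a b + Lam_coeff k b a
    else if a = b \<and> b < d then Lam_coeff k a a else 0)"
  by (auto simp: Qk_def linmul_def tau_def sum.distrib sum_Lam_mult_V[symmetric])

lemma Qk_in_S2: "Qk d v k \<in> S2 d"
  by (auto simp: S2_def Qk_coeff split: if_splits)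

lemma Lam_coeff_diag: "k < d \<Longrightarrow> a < d \<Longrightarrow> Lam_coeff k a a = 0"
  using nxt_neq[of k] by (auto simp: Lam_coeff_def ellv_eq_0 mod_Suc_eq nxt_prv)

lemma Lam_coeff_adjacent:
  assumes k: "k < d" and a: "a < d"
  shows "Lam_coeff k a (nxt a) + Lam_coeff k (nxt a) a = 0"
proof -
  have kk: "k mod d = k" using k by simp
  consider "a = k" | "a = nxt k" | "nxt a = k" | "a \<noteq> k" "a \<noteq> nxt k" "nxt a \<noteq> k" "nxt a \<noteq> nxt k"
    using nxt_inj[OF a k] by blast
  then show ?thesis
  proof cases
    case 1
    then show ?thesis using nxt_neq[OF k] alpha_nonzero[of k] alpha_nonzero[of "Suc k"]
      by (simp add: Lam_coeff_def kk ellv_Suc_self[OF k] ellv_prv_nxt[OF k])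
  next
    case 2
    then show ?thesis using nxt_neq[OF nxt_less, of k] nxt_nxt_neq[OF k] nxt_neq[OF k]
      by (simp add: Lam_coeff_def kk ellv_eq_0 mod_Suc_eq)
  next
    case 3
    then have "a = prv k" using prv_nxt[OF a] by simp
    then show ?thesis using 3 nxt_neq_prv[OF k] prv_neq[OF k] nxt_neq[OF k]
      by (simp add: Lam_coeff_def kk ellv_eq_0)
  qed (simp add: Lam_coeff_def kk)
qed

lemma diag_supported_iff:
  "diag_supported d c \<longleftrightarrow> (\<forall>a<d. c a a = 0 \<and> c a (nxt a) = 0 \<and> c (nxt a) a = 0)"
  unfolding diag_supported_def
proof (intro iffI allI impI)
  fix a assume D: "\<forall>i<d. \<forall>j<d. j = prv i \<or> j = i \<or> j = (i + 1) mod d \<longrightarrow> c i j = 0" and a: "a < d"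
  show "c a a = 0 \<and> c a (nxt a) = 0 \<and> c (nxt a) a = 0"
    using D[rule_format, OF a a] D[rule_format, OF a nxt_less] D[rule_format, OF nxt_less a]
    by (simp add: prv_nxt[OF a])
next
  fix i j assume R: "\<forall>a<d. c a a = 0 \<and> c a (nxt a) = 0 \<and> c (nxt a) a = 0"
    and i: "i < d" and j: "j < d" and ij: "j = prv i \<or> j = i \<or> j = (i + 1) mod d"
  then show "c i j = 0" using nxt_prv[OF i] by auto
qed

lemma Qk_diag_supported: "k < d \<Longrightarrow> diag_supported d (Qk d v k)"
  unfolding diag_supported_iff
  using Lam_coeff_diag Lam_coeff_adjacent nxt_neq nxt_less
  by (auto simp: Qk_coeff add.commute dest: nxt_neq)

abbreviation Qk_comb where "Qk_comb lam \<equiv> (\<lambda>a b. \<Sum>q<d. lam q * Qk d v q a b)"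

lemma Qk_comb_in_S2: "Qk_comb lam \<in> S2 d"
  using Qk_in_S2 by (simp add: S2_def) (metis (mono_tags, lifting) mult_zero_right sum.neutral)

lemma Qk_comb_diag_supported: "diag_supported d (Qk_comb lam)"
  using Qk_diag_supported unfolding diag_supported_def by simp

lemma qeval_Qk_comb: "qeval d (Qk_comb lam) x = (\<Sum>q<d. lam q * qeval d (Qk d v q) x)"
  by (simp add: qeval_sum_coeffs qeval_scale_coeffs)

lemma Qk_comb_in_IW2: "Qk_comb lam \<in> IW2 d v"
  unfolding IW2_def using Qk_comb_in_S2 by (simp add: qeval_Qk_comb Qk_vanishes_on_image)

lemma Qk_comb_vanishes_on_center: "vanishes_on_center d v (Qk_comb lam)"
  by (simp add: vanishes_on_center_def qeval_Qk_comb Qk_vanishes_on_center)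


section \<open>Wachspress quadrics are diagonally supported\<close>

lemma IW2_vanishes: "c \<in> IW2 d v \<Longrightarrow> qeval d c (\<lambda>j. bcoord d v j p) = 0"
  unfolding IW2_def by blast

lemma bcoord_eq_0:
  "j < d \<Longrightarrow> m < d \<Longrightarrow> m \<noteq> prv j \<Longrightarrow> m \<noteq> j \<Longrightarrow> ell d v m p = 0 \<Longrightarrow> bcoord d v j p = 0"
  by (auto simp: bcoord_eq bfactors_iff intro!: prod_zero)

lemma bcoord_nonzero:
  "j < d \<Longrightarrow> (\<And>m. m < d \<Longrightarrow> m \<noteq> prv j \<Longrightarrow> m \<noteq> j \<Longrightarrow> ell d v m p \<noteq> 0) \<Longrightarrow> bcoord d v j p \<noteq> 0"
  by (simp add: bcoord_eq bfactors_iff alpha_nonzero)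

lemma ell_vertex: "i < d \<Longrightarrow> ell d v m (v i) = ellv m i"
  by (simp add: ell_eq_ellh hom_vertex)

text \<open>Only \<open>b\<^sub>i\<close> is nonzero at the vertex \<open>v\<^sub>i\<close>.\<close>
lemma IW2_coeff_diag:
  assumes c: "c \<in> IW2 d v" and i: "i < d"
  shows "c i i = 0"
proof -
  let ?x = "\<lambda>j. bcoord d v j (v i)"
  have "?x j = 0" if j: "j < d" "j \<noteq> i" for j
  proof (cases "i = prv j")
    case False
    show ?thesis
      by (rule bcoord_eq_0[OF j(1) i False]) (use j in \<open>simp_all add: ell_vertex[OF i] ellv_eq_0\<close>)
  next
    case True
    then have "prv i \<noteq> prv j" "prv i \<noteq> j" using prv_inj[OF i j(1)] j nxt_prv[OF j(1)] nxt_neq_prv[OF i] by auto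
    moreover have "ell d v (prv i) (v i) = 0"
      unfolding ell_vertex[OF i] by (rule ellv_eq_0) (use nxt_prv[OF i] i in simp)
    ultimately show ?thesis using bcoord_eq_0[OF j(1) prv_less] by blast
  qed
  moreover have "?x i \<noteq> 0"
  proof (rule bcoord_nonzero[OF i])
    fix m assume m: "m < d" "m \<noteq> prv i" "m \<noteq> i"
    then have "i \<noteq> nxt m" using prv_nxt[OF m(1)] by auto
    then show "ell d v m (v i) \<noteq> 0" using ellv_nonzero[OF m(1) i] m by (simp add: ell_vertex[OF i])
  qed
  moreover have "qeval d c ?x = 0" using c by (rule IW2_vanishes)
  ultimately show ?thesis using qeval_support_single[OF i, of ?x c] by simp
qed

definition edge_midpoint where
  "edge_midpoint i = ((fst (v i) + fst (v (nxt i))) / 2, (snd (v i) + snd (v (nxt i))) / 2)"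

lemma ell_edge_midpoint: "i < d \<Longrightarrow> ell d v m (edge_midpoint i) = (ellv m i + ellv m (nxt i)) / 2"
proof -
  assume i: "i < d"
  have "hom (edge_midpoint i) = scale3 (1/2) (add3 (V i) (V (nxt i)))"
    using i by (simp add: edge_midpoint_def hom_def vv_def scale3_def add3_def add_divide_distrib)
  then show ?thesis by (simp add: ell_eq_ellh ellh_scale3 ellh_add3)
qed

text \<open>By convexity \<open>\<ell>\<^sub>m(v\<^sub>i)\<close> and \<open>\<ell>\<^sub>m(v\<^sub>i\<^sub>+\<^sub>1)\<close> have the same sign and do not both vanish.\<close>
lemma ell_edge_midpoint_nonzero:
  assumes i: "i < d" and m: "m < d" "m \<noteq> i"
  shows "ell d v m (edge_midpoint i) \<noteq> 0"
proof -
  obtain s where s: "s \<noteq> 0"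
    and pos: "\<And>i j. i < d \<Longrightarrow> j < d \<Longrightarrow> j \<noteq> i \<Longrightarrow> j \<noteq> nxt i \<Longrightarrow> s * ellv i j > 0"
    using convex_sign by blast
  have nonneg: "s * ellv m j \<ge> 0" if "j < d" for j
    using pos[OF m(1) that] ellv_eq_0_iff[OF m(1) that] by (cases "j = m \<or> j = nxt m") auto
  have "ellv m i \<noteq> 0 \<or> ellv m (nxt i) \<noteq> 0"
    using ellv_eq_0_iff[OF m(1) i] ellv_eq_0_iff[OF m(1) nxt_less] m nxt_nxt_neq[OF m(1)] nxt_neq[OF i]
    by auto
  then have "s * ellv m i > 0 \<or> s * ellv m (nxt i) > 0"
    using nonneg[OF i] nonneg[OF nxt_less] s by (auto simp: order_le_less)
  then have "s * (ellv m i + ellv m (nxt i)) > 0"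
    using nonneg[OF i] nonneg[OF nxt_less[of i]]
    by (auto simp: distrib_left intro: add_pos_nonneg add_nonneg_pos)
  then show ?thesis by (auto simp: ell_edge_midpoint[OF i])
qed

text \<open>Only \<open>b\<^sub>i\<close> and \<open>b\<^sub>i\<^sub>+\<^sub>1\<close> are nonzero at the midpoint of the edge \<open>v\<^sub>i v\<^sub>i\<^sub>+\<^sub>1\<close>.\<close>
lemma IW2_coeff_adjacent:
  assumes c: "c \<in> IW2 d v" and i: "i < d"
  shows "c i (nxt i) = 0 \<and> c (nxt i) i = 0"
proof -
  let ?x = "\<lambda>j. bcoord d v j (edge_midpoint i)"
  have si: "nxt i < d" "nxt i \<noteq> i" using nxt_less nxt_neq[OF i] by auto
  have "?x j = 0" if j: "j < d" "j \<noteq> i" "j \<noteq> nxt i" for j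
  proof (rule bcoord_eq_0[OF j(1) i])
    show "i \<noteq> prv j" using j nxt_prv[OF j(1)] by auto
    show "ell d v i (edge_midpoint i) = 0" by (simp add: ell_edge_midpoint[OF i] ellv_eq_0)
  qed (use j in simp)
  then have "qeval d c ?x = (c i (nxt i) + c (nxt i) i) * ?x i * ?x (nxt i)"
    using qeval_support_pair[OF i si(1) si(2)[symmetric], of ?x c]
      IW2_coeff_diag[OF c i] IW2_coeff_diag[OF c si(1)] by simp
  moreover have "qeval d c ?x = 0" using c by (rule IW2_vanishes)
  moreover have "?x i \<noteq> 0"
    by (rule bcoord_nonzero[OF i]) (rule ell_edge_midpoint_nonzero[OF i], auto)
  moreover have "?x (nxt i) \<noteq> 0"
    by (rule bcoord_nonzero[OF si(1)]) (rule ell_edge_midpoint_nonzero[OF i], auto simp: prv_nxt[OF i])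
  ultimately have "c i (nxt i) + c (nxt i) i = 0" by simp
  moreover have "c \<in> S2 d" using c by (simp add: IW2_def)
  ultimately show ?thesis using S2_coeff_pair_zero[of c d i "nxt i"] si(2) by auto
qed

lemma IW2_diag_supported: "c \<in> IW2 d v \<Longrightarrow> diag_supported d c"
  by (simp add: diag_supported_iff IW2_coeff_diag IW2_coeff_adjacent)


section \<open>Pair forms\<close>

definition nonadjacent where
  "nonadjacent i k \<longleftrightarrow> i < d \<and> k < d \<and> k \<noteq> i \<and> k \<noteq> nxt i \<and> k \<noteq> prv i"

lemma nonadjacentD:
  assumes "nonadjacent i k"
  shows "i < d" "k < d" "k \<noteq> i" "k \<noteq> nxt i" "k \<noteq> prv i" "i \<noteq> nxt k" "i \<noteq> prv k"
    "nxt i \<noteq> nxt k" "nxt i \<noteq> i" "nxt k \<noteq> k"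
proof -
  show i: "i < d" and k: "k < d" and "k \<noteq> i" "k \<noteq> nxt i" "k \<noteq> prv i"
    using assms by (auto simp: nonadjacent_def)
  then show "i \<noteq> nxt k" "i \<noteq> prv k" "nxt i \<noteq> nxt k" "nxt i \<noteq> i" "nxt k \<noteq> k"
    using prv_nxt[OF k] nxt_prv[OF k] nxt_inj[OF i k] nxt_neq[OF i] nxt_neq[OF k] by auto
qed

lemma nonadjacent_sym:
  assumes "nonadjacent i k"
  shows "nonadjacent k i"
  using nonadjacentD[OF assms] by (auto simp: nonadjacent_def)

definition edge_meet where "edge_meet i k = cross3 (nvec d v i) (nvec d v k)"

lemma ellh_edge_meet: "ellh m (edge_meet i k) = det3 (nvec d v m) (nvec d v i) (nvec d v k)"
  by (simp add: edge_meet_def ellh_eq_dot3 det3_def)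

lemma ellh_edge_meet_left: "ellh i (edge_meet i k) = 0"
  and ellh_edge_meet_right: "ellh k (edge_meet i k) = 0"
  by (simp_all add: ellh_edge_meet det3_same_12 det3_same_13)

lemma ellh_edge_meet_nonzero:
  "nonadjacent i k \<Longrightarrow> m < d \<Longrightarrow> m \<noteq> i \<Longrightarrow> m \<noteq> k \<Longrightarrow> ellh m (edge_meet i k) \<noteq> 0"
  unfolding ellh_edge_meet
  by (rule edge_normals_independent) (auto dest: nonadjacentD)

text \<open>\<open>edge_weight o P j\<close> is \<open>b\<^sub>j(P)\<close> with the factor \<open>\<ell>\<^sub>o\<close> left out.\<close>
definition edge_weight where
  "edge_weight o' P j = alpha d v j * (\<Prod>m\<in>bfactors j - {o'}. ellh m P)"

lemma edge_weight_meet_nonzero: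
  assumes ik: "nonadjacent i k" and a: "a = i \<or> a = nxt i"
  shows "edge_weight k (edge_meet i k) a \<noteq> 0" "edge_weight k (edge_meet k i) a \<noteq> 0"
proof -
  have "ellh m (edge_meet i k) \<noteq> 0" "ellh m (edge_meet k i) \<noteq> 0" if m: "m \<in> bfactors a - {k}" for m
  proof -
    have "m < d" "m \<noteq> k" "m \<noteq> i"
      using m a prv_nxt[of i] nonadjacentD[OF ik] by (auto simp: bfactors_iff)
    then show "ellh m (edge_meet i k) \<noteq> 0" "ellh m (edge_meet k i) \<noteq> 0"
      using ellh_edge_meet_nonzero ik nonadjacent_def nonadjacentD[OF ik] by auto
  qed
  then show "edge_weight k (edge_meet i k) a \<noteq> 0" "edge_weight k (edge_meet k i) a \<noteq> 0"
    unfolding edge_weight_def by (simp_all add: alpha_nonzero)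
qed

definition pair_form where
  "pair_form c i k = (\<Sum>a\<in>{i, nxt i}. \<Sum>b\<in>{k, nxt k}.
     (c a b + c b a) * edge_weight k (edge_meet i k) a * edge_weight i (edge_meet i k) b)"

lemma pair_form_diff: "pair_form (\<lambda>a b. c a b - e a b) i k = pair_form c i k - pair_form e i k"
  by (simp add: pair_form_def sum_subtractf[symmetric] algebra_simps)

lemma qeval_two_edges:
  assumes dg: "diag_supported d c" and ik: "nonadjacent i k"
    and y: "\<And>j. j < d \<Longrightarrow> j \<noteq> i \<Longrightarrow> j \<noteq> nxt i \<Longrightarrow> y j = 0"
    and z: "\<And>j. j < d \<Longrightarrow> j \<noteq> k \<Longrightarrow> j \<noteq> nxt k \<Longrightarrow> z j = 0"
  shows "qeval d c (\<lambda>j. y j + z j) = (\<Sum>a\<in>{i, nxt i}. \<Sum>b\<in>{k, nxt k}. (c a b + c b a) * y a * z b)"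
proof -
  note f = nonadjacentD[OF ik]
  have dz: "c a a = 0" "c a (nxt a) = 0" "c (nxt a) a = 0" if "a < d" for a
    using dg that by (simp_all add: diag_supported_iff)
  have "qeval d c y = 0"
    using qeval_support_pair[OF f(1) nxt_less f(9)[symmetric], of y c] y dz[OF f(1)] dz[OF nxt_less[of i]]
    by simp
  moreover have "qeval d c z = 0"
    using qeval_support_pair[OF f(2) nxt_less f(10)[symmetric], of z c] z dz[OF f(2)] dz[OF nxt_less[of k]]
    by simp
  moreover have "qpolar d c y z = (\<Sum>a\<in>{i, nxt i}. \<Sum>b\<in>{k, nxt k}. (c a b + c b a) * y a * z b)"
    by (rule qpolar_support) (use f nxt_less y z in auto)
  ultimately show ?thesis by (simp add: qeval_add)
qed


section \<open>Pair forms of Wachspress quadrics vanish\<close>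

definition bhom where "bhom j P = alpha d v j * (\<Prod>m\<in>bfactors j. ellh m P)"

lemma card_bfactors: "j < d \<Longrightarrow> card (bfactors j) = d - 2"
  using prv_less[of j] prv_neq[of j] by (simp add: bfactors_def card_Diff_subset)

lemma IW2_vanishes_bhom:
  assumes c: "c \<in> IW2 d v" and z: "snd (snd P) \<noteq> 0"
  shows "qeval d c (\<lambda>j. bhom j P) = 0"
proof -
  obtain x y where P: "P = (x, y, snd (snd P))" by (cases P) simp
  define p where "p = (x / snd (snd P), y / snd (snd P))"
  have "P = scale3 (snd (snd P)) (hom p)"
    using z by (subst P) (simp add: p_def scale3_def hom_def)
  then have "ellh m P = snd (snd P) * ell d v m p" for m
    by (metis ell_eq_ellh ellh_scale3)
  then have "bhom j P = snd (snd P) ^ (d - 2) * bcoord d v j p" if "j < d" for j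
    using that by (simp add: bhom_def bcoord_eq prod.distrib card_bfactors)
  then have "qeval d c (\<lambda>j. bhom j P) = qeval d c (\<lambda>j. snd (snd P) ^ (d - 2) * bcoord d v j p)"
    by (intro qeval_cong) simp
  also have "\<dots> = 0" by (simp add: qeval_scale IW2_vanishes[OF c])
  finally show ?thesis .
qed

text \<open>The line through the meet of edge lines \<open>i\<close> and \<open>k\<close> in direction \<open>v\<^sub>i + v\<^sub>k\<close>, and
  the edge forms along it as linear polynomials in the parameter.\<close>
definition pencil_point where
  "pencil_point i k e = add3 (edge_meet i k) (scale3 e (add3 (V i) (V k)))"

definition ellh_pencil where
  "ellh_pencil i k m = [:ellh m (edge_meet i k), ellh m (add3 (V i) (V k)):]"

lemma poly_ellh_pencil: "poly (ellh_pencil i k m) e = ellh m (pencil_point i k e)"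
  by (simp add: ellh_pencil_def pencil_point_def ellh_add3 ellh_scale3 algebra_simps)

text \<open>Every \<open>b\<^sub>j\<close> contains the factor \<open>\<ell>\<^sub>i\<close> or \<open>\<ell>\<^sub>k\<close>, which vanish at the meet; dividing out
  the parameter \<open>e\<close> gives the following polynomials.\<close>
definition pencil_poly where
  "pencil_poly i k j =
    (if j = i \<or> j = nxt i then
       smult (alpha d v j * ellh k (add3 (V i) (V k))) (\<Prod>m\<in>bfactors j - {k}. ellh_pencil i k m)
     else if j = k \<or> j = nxt k then
       smult (alpha d v j * ellh i (add3 (V i) (V k))) (\<Prod>m\<in>bfactors j - {i}. ellh_pencil i k m)
     else smult (alpha d v j * ellh i (add3 (V i) (V k)) * ellh k (add3 (V i) (V k)))
       (pCons 0 (\<Prod>m\<in>bfactors j - {i, k}. ellh_pencil i k m)))"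

lemma bhom_pencil_point:
  assumes ik: "nonadjacent i k" and j: "j < d"
  shows "bhom j (pencil_point i k e) = e * poly (pencil_poly i k j) e"
proof -
  note f = nonadjacentD[OF ik]
  have bhom_eq: "bhom j (pencil_point i k e) = alpha d v j * (\<Prod>m\<in>bfactors j. poly (ellh_pencil i k m) e)"
    by (simp add: bhom_def poly_ellh_pencil)
  have pi: "poly (ellh_pencil i k i) e = e * ellh i (add3 (V i) (V k))"
    and pk: "poly (ellh_pencil i k k) e = e * ellh k (add3 (V i) (V k))"
    by (simp_all add: ellh_pencil_def ellh_edge_meet_left ellh_edge_meet_right)
  consider "j = i \<or> j = nxt i" | "j \<noteq> i" "j \<noteq> nxt i" "j = k \<or> j = nxt k"
    | "j \<noteq> i" "j \<noteq> nxt i" "j \<noteq> k" "j \<noteq> nxt k" by blast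
  then show ?thesis
  proof cases
    case 1
    then have "k \<in> bfactors j" using f prv_nxt[OF f(1)] by (auto simp: bfactors_iff)
    then show ?thesis
      using 1 by (simp add: bhom_eq pencil_poly_def poly_prod prod.remove[of _ k] pk)
  next
    case 2
    then have "i \<in> bfactors j" using f prv_nxt[OF f(2)] by (auto simp: bfactors_iff)
    then show ?thesis
      using 2 by (simp add: bhom_eq pencil_poly_def poly_prod prod.remove[of _ i] pi)
  next
    case 3
    then have "i \<in> bfactors j" "k \<in> bfactors j - {i}"
      using f nxt_prv[OF j] by (auto simp: bfactors_iff)
    then have "(\<Prod>m\<in>bfactors j. poly (ellh_pencil i k m) e)
        = poly (ellh_pencil i k i) e * (poly (ellh_pencil i k k) e
          * (\<Prod>m\<in>bfactors j - {i} - {k}. poly (ellh_pencil i k m) e))"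
      by (simp add: prod.remove[of _ i] prod.remove[of "bfactors j - {i}" k])
    moreover have "bfactors j - {i} - {k} = bfactors j - {i, k}" by auto
    ultimately show ?thesis
      using 3 by (simp add: bhom_eq pencil_poly_def poly_prod pi pk algebra_simps)
  qed
qed

lemma poly_pencil_poly_0:
  assumes ik: "nonadjacent i k"
  shows "poly (pencil_poly i k j) 0 =
    (if j = i \<or> j = nxt i then ellh k (add3 (V i) (V k)) * edge_weight k (edge_meet i k) j else 0)
  + (if j = k \<or> j = nxt k then ellh i (add3 (V i) (V k)) * edge_weight i (edge_meet i k) j else 0)"
  using nonadjacentD[OF ik]
  by (auto simp: pencil_poly_def edge_weight_def poly_prod ellh_pencil_def)

lemma IW2_pair_form_zero:
  assumes c: "c \<in> IW2 d v" and ik: "nonadjacent i k"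
  shows "pair_form c i k = 0"
proof -
  note f = nonadjacentD[OF ik]
  let ?\<delta> = "add3 (V i) (V k)"
  define y where "y j = (if j = i \<or> j = nxt i then ellh k ?\<delta> * edge_weight k (edge_meet i k) j else 0)" for j
  define z where "z j = (if j = k \<or> j = nxt k then ellh i ?\<delta> * edge_weight i (edge_meet i k) j else 0)" for j
  have "qeval d c (\<lambda>j. poly (pencil_poly i k j) 0) = 0"
  proof (rule qeval_poly_at_0[where r = "- snd (snd (edge_meet i k)) / 2"])
    fix e :: 'a assume e: "e \<noteq> 0" "e \<noteq> - snd (snd (edge_meet i k)) / 2"
    have "snd (snd (pencil_point i k e)) = snd (snd (edge_meet i k)) + 2 * e"
      by (cases "edge_meet i k") (simp add: pencil_point_def add3_def scale3_def V_third)
    with e have "snd (snd (pencil_point i k e)) \<noteq> 0" by (auto simp: field_simps)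
    then have "0 = qeval d c (\<lambda>j. bhom j (pencil_point i k e))" by (simp add: IW2_vanishes_bhom[OF c])
    also have "\<dots> = e * e * qeval d c (\<lambda>j. poly (pencil_poly i k j) e)"
      by (simp add: qeval_cong[where y = "\<lambda>j. e * poly (pencil_poly i k j) e"] bhom_pencil_point[OF ik]
          qeval_scale)
    finally show "qeval d c (\<lambda>j. poly (pencil_poly i k j) e) = 0" using e(1) by simp
  qed
  moreover have "qeval d c (\<lambda>j. poly (pencil_poly i k j) 0) = qeval d c (\<lambda>j. y j + z j)"
    by (simp add: poly_pencil_poly_0[OF ik] y_def z_def)
  moreover have "qeval d c (\<lambda>j. y j + z j) = ellh k ?\<delta> * ellh i ?\<delta> * pair_form c i k"
    by (subst qeval_two_edges[OF IW2_diag_supported[OF c] ik])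
      (use f in \<open>auto simp: y_def z_def pair_form_def sum_distrib_left algebra_simps\<close>)
  moreover have "ellh k ?\<delta> = ellv k i" "ellh i ?\<delta> = ellv i k"
    by (simp_all add: ellh_add3 ellv_eq_0)
  ultimately show ?thesis using ellv_nonzero f by auto
qed


section \<open>Pair forms of quadrics vanishing on the center vanish\<close>

lemma tau_vec_support_pair:
  assumes "a < d" "b < d" "a \<noteq> b" "\<And>j. j < d \<Longrightarrow> j \<noteq> a \<Longrightarrow> j \<noteq> b \<Longrightarrow> x j = 0"
  shows "tau_vec x = add3 (scale3 (x a) (V a)) (scale3 (x b) (V b))"
proof -
  have "(\<Sum>j<d. g j * x j) = x a * g a + x b * g b" for g :: "nat \<Rightarrow> 'a"
    using sum_support[of "{a, b}" d "\<lambda>j. g j * x j"] assms by (auto simp: mult.commute)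
  then show ?thesis unfolding tau_vec_def add3_def scale3_def by simp
qed

lemma tau_vec_lin: "tau_vec (\<lambda>j. s * x j + t * y j) = add3 (scale3 s (tau_vec x)) (scale3 t (tau_vec y))"
  by (simp add: tau_vec_def add3_def scale3_def sum.distrib sum_distrib_left algebra_simps)

definition edge_weight_rest where
  "edge_weight_rest a o' P = (\<Prod>m\<in>{0..<d} - {prv a, a, nxt a, o'}. ellh m P)"

lemma edge_weight_self:
  assumes a: "a < d" and o: "o' \<noteq> nxt a"
  shows "edge_weight o' P a = alpha d v a * ellh (nxt a) P * edge_weight_rest a o' P"
proof -
  have "nxt a \<in> bfactors a - {o'}"
    using o nxt_less nxt_neq[OF a] nxt_neq_prv[OF a] by (simp add: bfactors_iff)
  moreover have "bfactors a - {o'} - {nxt a} = {0..<d} - {prv a, a, nxt a, o'}" by (auto simp: bfactors_def)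
  ultimately show ?thesis
    by (simp add: edge_weight_def edge_weight_rest_def prod.remove[of _ "nxt a"])
qed

lemma edge_weight_nxt:
  assumes a: "a < d" and o: "o' \<noteq> prv a"
  shows "edge_weight o' P (nxt a) = alpha d v (nxt a) * ellh (prv a) P * edge_weight_rest a o' P"
proof -
  have "prv a \<in> bfactors (nxt a) - {o'}"
    using o prv_less prv_neq[OF a] nxt_neq_prv[OF a] prv_nxt[OF a] by (simp add: bfactors_iff)
  moreover have "bfactors (nxt a) - {o'} - {prv a} = {0..<d} - {prv a, a, nxt a, o'}"
    using prv_nxt[OF a] by (auto simp: bfactors_def)
  ultimately show ?thesis
    by (simp add: edge_weight_def edge_weight_rest_def prod.remove[of _ "prv a"])
qed

lemma point_on_edge_line:
  assumes a: "a < d" and P: "P = cross3 (nvec d v a) w"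
  shows "add3 (scale3 (alpha d v a * ellh (nxt a) P) (V a)) (scale3 (alpha d v (nxt a) * ellh (prv a) P) (V (nxt a)))
       = scale3 (alpha d v a * alpha d v (nxt a)) P"
proof -
  have "alpha d v a = det3 (V (prv a)) (V a) (V (nxt a))" by (simp add: alpha_def V_mod)
  moreover have "alpha d v (nxt a) = det3 (V a) (V (nxt a)) (V (Suc (nxt a)))"
    by (simp add: alpha_def prv_nxt[OF a])
  moreover have "ellh (nxt a) P = det3 (V (nxt a)) (V (Suc (nxt a))) P" by (simp add: ellh_def)
  moreover have "ellh (prv a) P = det3 (V (prv a)) (V a) P" by (simp add: ellh_def V_Suc_prv[OF a])
  moreover have "P = cross3 (cross3 (V a) (V (nxt a))) w" using P by (simp add: nvec_def V_mod)
  ultimately show ?thesis by (simp only: point_on_line_expansion)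
qed

text \<open>Weighting the two endpoints of an edge by the edge weights at a point \<open>P\<close> of its
  edge line gives a preimage of \<open>P\<close> under \<open>\<tau>\<close>.\<close>
lemma tau_vec_edge_weights:
  assumes a: "a < d" and o: "o' \<noteq> nxt a" "o' \<noteq> prv a" and P: "P = cross3 (nvec d v a) w"
  shows "tau_vec (\<lambda>j. if j = a \<or> j = nxt a then edge_weight o' P j else 0)
       = scale3 (edge_weight_rest a o' P * (alpha d v a * alpha d v (nxt a))) P"
proof -
  have "tau_vec (\<lambda>j. if j = a \<or> j = nxt a then edge_weight o' P j else 0)
      = add3 (scale3 (edge_weight o' P a) (V a)) (scale3 (edge_weight o' P (nxt a)) (V (nxt a)))"
    using tau_vec_support_pair[OF a nxt_less nxt_neq[OF a, symmetric],
        of "\<lambda>j. if j = a \<or> j = nxt a then edge_weight o' P j else 0"] by simp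
  also have "\<dots> = scale3 (edge_weight_rest a o' P) (add3 (scale3 (alpha d v a * ellh (nxt a) P) (V a))
                     (scale3 (alpha d v (nxt a) * ellh (prv a) P) (V (nxt a))))"
    by (simp add: edge_weight_self[OF a o(1)] edge_weight_nxt[OF a o(2)] scale3_add3 scale3_scale3
        algebra_simps)
  finally show ?thesis by (simp add: point_on_edge_line[OF a P] scale3_scale3)
qed

lemma edge_weight_rest_nonzero:
  assumes ik: "nonadjacent i k" and "(a = i \<and> o' = k) \<or> (a = k \<and> o' = i)"
  shows "edge_weight_rest a o' (edge_meet i k) \<noteq> 0"
  using assms ellh_edge_meet_nonzero[OF ik] by (auto simp: edge_weight_rest_def)

text \<open>The edge weights give points \<open>y\<close> on the edge \<open>i\<close> and \<open>z\<close> on the edge \<open>k\<close> with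
  \<open>\<tau>(y)\<close>, \<open>\<tau>(z)\<close> proportional to the meet; a combination lies in the center.\<close>
lemma center_pair_form_zero:
  assumes dg: "diag_supported d c" and vc: "vanishes_on_center d v c" and ik: "nonadjacent i k"
  shows "pair_form c i k = 0"
proof -
  note f = nonadjacentD[OF ik]
  let ?P = "edge_meet i k"
  define y where "y j = (if j = i \<or> j = nxt i then edge_weight k ?P j else 0)" for j
  define z where "z j = (if j = k \<or> j = nxt k then edge_weight i ?P j else 0)" for j
  define \<mu>y where "\<mu>y = edge_weight_rest i k ?P * (alpha d v i * alpha d v (nxt i))"
  define \<mu>z where "\<mu>z = edge_weight_rest k i ?P * (alpha d v k * alpha d v (nxt k))"
  have "tau_vec y = scale3 \<mu>y ?P"
    unfolding y_def \<mu>y_def by (rule tau_vec_edge_weights) (use f in \<open>auto simp: edge_meet_def\<close>)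
  moreover have "tau_vec z = scale3 \<mu>z ?P"
    unfolding z_def \<mu>z_def
    by (rule tau_vec_edge_weights) (use f in \<open>auto simp: edge_meet_def cross3_commute_neg[of "nvec d v i"]\<close>)
  ultimately have "tau_vec (\<lambda>j. \<mu>z * y j + (- \<mu>y) * z j) = (0, 0, 0)"
    unfolding tau_vec_lin by (cases ?P) (simp add: scale3_def add3_def)
  then have "0 = qeval d c (\<lambda>j. \<mu>z * y j + (- \<mu>y) * z j)"
    using vc by (simp add: vanishes_on_center_def tau_vec_eq_0_iff)
  also have "\<dots> = \<mu>z * (- \<mu>y) * pair_form c i k"
    by (subst qeval_two_edges[OF dg ik])
      (use f in \<open>auto simp: y_def z_def pair_form_def sum_distrib_left algebra_simps\<close>)
  finally show ?thesis
    using edge_weight_rest_nonzero[OF ik] alpha_nonzero by (simp add: \<mu>y_def \<mu>z_def)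
qed


section \<open>Diagonally supported quadrics with vanishing pair forms are spanned by the \<open>Q\<^sub>k\<close>\<close>

lemma pair_form_expand:
  assumes ik: "nonadjacent i k"
  shows "pair_form c i k =
     (c i k + c k i) * edge_weight k (edge_meet i k) i * edge_weight i (edge_meet i k) k
   + (c i (nxt k) + c (nxt k) i) * edge_weight k (edge_meet i k) i * edge_weight i (edge_meet i k) (nxt k)
   + (c (nxt i) k + c k (nxt i)) * edge_weight k (edge_meet i k) (nxt i) * edge_weight i (edge_meet i k) k
   + (c (nxt i) (nxt k) + c (nxt k) (nxt i))
       * edge_weight k (edge_meet i k) (nxt i) * edge_weight i (edge_meet i k) (nxt k)"
  using nonadjacentD(9,10)[OF ik] by (simp add: pair_form_def add.assoc)

text \<open>Walking around the polygon from the vertex \<open>i + 1\<close>, each pair form of \<open>i\<close> with a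
  nonadjacent edge determines the next symmetric coefficient of row \<open>i + 1\<close>.\<close>
lemma pair_forms_zero_walk:
  assumes dg: "diag_supported d r" and E: "\<And>i k. nonadjacent i k \<Longrightarrow> pair_form r i k = 0"
    and i: "i < d" and row: "\<And>b. b < d \<Longrightarrow> r i b + r b i = 0"
    and x: "2 \<le> x" "x \<le> d - 1"
  shows "r (nxt i) ((i + x) mod d) + r ((i + x) mod d) (nxt i) = 0"
  using x
proof (induction x rule: nat_induct_at_least)
  case base
  have "r (nxt i) (nxt (nxt i)) = 0" "r (nxt (nxt i)) (nxt i) = 0"
    using dg nxt_less[of i] by (simp_all add: diag_supported_iff)
  moreover have "(i + 2) mod d = nxt (nxt i)" by (simp add: mod_Suc_eq)
  ultimately show ?case by simp
next
  case (Suc x)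
  let ?t = "nxt i" and ?b = "(i + x) mod d"
  have nxt_b: "nxt ?b = (i + Suc x) mod d" by (simp add: mod_Suc_eq)
  have x: "x < d" "Suc x < d" using Suc by auto
  have "?b \<noteq> i" using mod_add_left_inj[OF i x(1), of 0] i Suc(1) by auto
  moreover have "?b \<noteq> nxt i" using mod_add_left_inj[OF i x(1), of 1] Suc(1) d_ge_4 by auto
  moreover have "nxt ?b \<noteq> i" unfolding nxt_b using mod_add_left_inj[OF i x(2), of 0] i by auto
  then have "?b \<noteq> prv i" using nxt_prv[OF i] by auto
  ultimately have ib: "nonadjacent i ?b" using i d_pos by (simp add: nonadjacent_def)
  have "r ?t ?b + r ?b ?t = 0" using Suc.IH x by simp
  then have "(r ?t (nxt ?b) + r (nxt ?b) ?t)
      * edge_weight ?b (edge_meet i ?b) ?t * edge_weight i (edge_meet i ?b) (nxt ?b) = 0"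
    using E[OF ib] pair_form_expand[OF ib, of r] row[OF nonadjacentD(2)[OF ib]] row[OF nxt_less]
    by simp
  then show ?case
    using edge_weight_meet_nonzero(1)[OF ib, of ?t]
      edge_weight_meet_nonzero(2)[OF nonadjacent_sym[OF ib], of "nxt ?b"]
    by (simp add: nxt_b)
qed

lemma pair_forms_zero_next_row:
  assumes dg: "diag_supported d r" and E: "\<And>i k. nonadjacent i k \<Longrightarrow> pair_form r i k = 0"
    and i: "i < d" and row: "\<And>b. b < d \<Longrightarrow> r i b + r b i = 0" and b: "b < d"
  shows "r (nxt i) b + r b (nxt i) = 0"
proof -
  define x where "x = (b + d - i) mod d"
  have bx: "b = (i + x) mod d"
  proof -
    have "(i + x) mod d = (i + (b + d - i)) mod d" by (simp add: x_def mod_add_right_eq)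
    also have "i + (b + d - i) = b + d" using i by simp
    finally show ?thesis using b by simp
  qed
  have "x < d" using d_pos by (simp add: x_def)
  then consider "x = 0" | "x = 1" | "2 \<le> x" "x \<le> d - 1" by linarith
  then show ?thesis
  proof cases
    case 1 then show ?thesis using bx i row[OF nxt_less[of i]] by (simp add: add.commute)
  next
    case 2 then show ?thesis using bx dg nxt_less[of i] by (simp add: diag_supported_iff)
  next
    case 3 then show ?thesis using pair_forms_zero_walk[OF dg E i row] bx by simp
  qed
qed

lemma diag_supported_pair_forms_zero_eq_0:
  assumes r: "r \<in> S2 d" and dg: "diag_supported d r"
    and E: "\<And>i k. nonadjacent i k \<Longrightarrow> pair_form r i k = 0"
    and row0: "\<And>j. j < d \<Longrightarrow> r 0 j + r j 0 = 0"
  shows "r a b = 0"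
proof -
  have rows: "\<forall>b<d. r i b + r b i = 0" if "i < d" for i
    using that
  proof (induction i)
    case 0 then show ?case using row0 by simp
  next
    case (Suc i)
    then have i: "i < d" "nxt i = Suc i" and "\<And>b. b < d \<Longrightarrow> r i b + r b i = 0" by auto
    then show ?case using pair_forms_zero_next_row[OF dg E i(1)] by auto
  qed
  consider "a < b" "b < d" | "a = b" "b < d" | "\<not> (a \<le> b \<and> b < d)" by linarith
  then show ?thesis
  proof cases
    case 1 then show ?thesis using rows[of a] S2_below_diagonal[OF r, of a b] by auto
  next
    case 2 then show ?thesis using dg by (simp add: diag_supported_iff)
  next
    case 3 then show ?thesis using r by (auto simp: S2_def)
  qed
qed

lemma Qk_comb_row0:
  assumes j: "2 \<le> j" "j \<le> d - 2" and lam: "lam 0 = 0" "lam (d - 1) = 0"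
  shows "Qk_comb lam 0 j + Qk_comb lam j 0
       = lam (j - 1) * ellv j 0 / alpha d v j - lam j * ellv (j - 1) 0 / alpha d v j"
proof -
  have jd: "j < d" "0 < j" and pj: "prv j = j - 1" and sj: "Suc (j - 1) = j"
    using j d_ge_4 prev_eq[of j] by auto
  have "lam q * Lam_coeff q 0 j = 0" if "q < d" for q
    using that lam nxt_eq[of q] by (cases "q = 0 \<or> q = d - 1") (auto simp: Lam_coeff_def)
  then have "(\<Sum>q<d. lam q * Lam_coeff q 0 j) = 0" by (intro sum.neutral) auto
  then have "Qk_comb lam 0 j + Qk_comb lam j 0 = (\<Sum>q<d. lam q * Lam_coeff q j 0)"
    using jd by (simp add: Qk_coeff sum.distrib distrib_left)
  also have "\<dots> = (\<Sum>q<d. if q = prv j then lam q * (ellv (Suc q) 0 / alpha d v (Suc q)) else 0)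
                - (\<Sum>q<d. if q = j then lam q * (ellv (prv q) 0 / alpha d v q) else 0)"
  proof -
    have "j = nxt q \<longleftrightarrow> q = prv j" if "q < d" for q
      using that jd prv_nxt nxt_prv by metis
    then have "lam q * Lam_coeff q j 0
      = (if q = prv j then lam q * (ellv (Suc q) 0 / alpha d v (Suc q)) else 0)
      - (if q = j then lam q * (ellv (prv q) 0 / alpha d v q) else 0)" if "q < d" for q
      using that by (simp add: Lam_coeff_def algebra_simps)
    then have "(\<Sum>q<d. lam q * Lam_coeff q j 0)
      = (\<Sum>q<d. (if q = prv j then lam q * (ellv (Suc q) 0 / alpha d v (Suc q)) else 0)
               - (if q = j then lam q * (ellv (prv q) 0 / alpha d v q) else 0))"
      by (intro sum.cong) auto
    then show ?thesis by (simp only: sum_subtractf)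
  qed
  also have "\<dots> = lam (j - 1) * ellv j 0 / alpha d v j - lam j * ellv (j - 1) 0 / alpha d v j"
    using jd prv_less[of j] by (simp add: sum.delta pj sj)
  finally show ?thesis .
qed

text \<open>The coefficients of \<open>Q\<^sub>k\<close> fitting row \<open>0\<close> are found by forward substitution along
  \<open>j = 2, \<dots>, d - 2\<close>; \<open>\<ell>\<^sub>j\<^sub>-\<^sub>1(v\<^sub>0) \<noteq> 0\<close> there.\<close>
primrec row_lam :: "(nat \<Rightarrow> nat \<Rightarrow> 'a) \<Rightarrow> nat \<Rightarrow> 'a" where
  "row_lam c 0 = 0"
| "row_lam c (Suc j) = (if Suc j \<le> 1 \<or> d - 1 \<le> Suc j then 0
     else (row_lam c j * ellv (Suc j) 0 - alpha d v (Suc j) * c 0 (Suc j)) / ellv j 0)"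

lemma exists_Qk_comb_row0:
  assumes c: "c \<in> S2 d" and dg: "diag_supported d c"
  shows "\<exists>lam. \<forall>j<d. Qk_comb lam 0 j + Qk_comb lam j 0 = c 0 j + c j 0"
proof (intro exI allI impI)
  let ?lam = "row_lam c"
  fix j assume j: "j < d"
  show "Qk_comb ?lam 0 j + Qk_comb ?lam j 0 = c 0 j + c j 0"
  proof (cases "2 \<le> j \<and> j \<le> d - 2")
    case True
    have lam: "?lam 0 = 0" "?lam (d - 1) = 0"
      using d_ge_4 by (simp_all add: Suc_diff_Suc[symmetric] numeral_2_eq_2 del: Suc_diff_Suc)
    have j1: "j - 1 < d" "nxt (j - 1) = j" "j - 1 \<noteq> d - 1" "Suc (j - 1) = j" using True d_ge_4 by auto
    then have "ellv (j - 1) 0 \<noteq> 0" using ellv_nonzero[OF j1(1), of 0] True d_pos by auto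
    then have rec: "?lam j * ellv (j - 1) 0 = ?lam (j - 1) * ellv j 0 - alpha d v j * c 0 j"
      using True row_lam.simps(2)[of c "j - 1"] unfolding j1(4) by auto
    have "Qk_comb ?lam 0 j + Qk_comb ?lam j 0 = (?lam (j - 1) * ellv j 0 - ?lam j * ellv (j - 1) 0) / alpha d v j"
      using Qk_comb_row0[OF True[THEN conjunct1] True[THEN conjunct2] lam] by (simp add: diff_divide_distrib)
    also have "\<dots> = c 0 j" using rec alpha_nonzero[of j] by simp
    finally show ?thesis using S2_below_diagonal[OF c, of 0 j] True by simp
  next
    case False
    have diag: "Qk_comb ?lam a b = 0 \<and> c a b = 0"
      if "a < d" "b < d" "b = a \<or> b = nxt a \<or> a = nxt b" for a b
      using that dg Qk_comb_diag_supported[of ?lam] by (auto simp: diag_supported_iff)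
    have "nxt 0 = 1" "nxt (d - 1) = 0" using d_ge_4 by auto
    moreover have "j = 0 \<or> j = 1 \<or> j = d - 1" using False j by linarith
    ultimately have "j = 0 \<or> j = nxt 0 \<or> 0 = nxt j" by auto
    then show ?thesis using diag[OF d_pos j] diag[OF j d_pos] by auto
  qed
qed

lemma in_span_Qk:
  assumes c: "c \<in> S2 d" and dg: "diag_supported d c"
    and E: "\<And>i k. nonadjacent i k \<Longrightarrow> pair_form c i k = 0"
  shows "\<exists>lam. c = Qk_comb lam"
proof -
  obtain lam where row: "\<And>j. j < d \<Longrightarrow> Qk_comb lam 0 j + Qk_comb lam j 0 = c 0 j + c j 0"
    using exists_Qk_comb_row0[OF c dg] by blast
  define r where "r = (\<lambda>a b. c a b - Qk_comb lam a b)"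
  have "r a b = 0" for a b
  proof (rule diag_supported_pair_forms_zero_eq_0)
    show "r \<in> S2 d" unfolding r_def by (rule S2_diff[OF c Qk_comb_in_S2])
    show "diag_supported d r"
      using dg Qk_comb_diag_supported[of lam] by (simp add: diag_supported_iff r_def)
    show "pair_form r i k = 0" if "nonadjacent i k" for i k
      using E[OF that] IW2_pair_form_zero[OF Qk_comb_in_IW2 that] by (simp add: r_def pair_form_diff)
    show "r 0 j + r j 0 = 0" if "j < d" for j
      using row[OF that] by (simp add: r_def)
  qed
  then have "c = Qk_comb lam" by (simp add: r_def fun_eq_iff)
  then show ?thesis by (rule exI[of _ lam])
qed

lemma IW2_eq_span_Qk: "IW2 d v = {Qk_comb lam | lam. True}"
proof
  show "IW2 d v \<subseteq> {Qk_comb lam | lam. True}"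
  proof
    fix c assume c: "c \<in> IW2 d v"
    then have "c \<in> S2 d" by (simp add: IW2_def)
    from in_span_Qk[OF this IW2_diag_supported[OF c] IW2_pair_form_zero[OF c]]
    show "c \<in> {Qk_comb lam | lam. True}" by simp
  qed
  show "{Qk_comb lam | lam. True} \<subseteq> IW2 d v" using Qk_comb_in_IW2 by auto
qed

lemma center_quadrics_eq_span_Qk:
  "{c \<in> S2 d. diag_supported d c \<and> vanishes_on_center d v c} = {Qk_comb lam | lam. True}"
proof
  show "{c \<in> S2 d. diag_supported d c \<and> vanishes_on_center d v c} \<subseteq> {Qk_comb lam | lam. True}"
  proof
    fix c assume "c \<in> {c \<in> S2 d. diag_supported d c \<and> vanishes_on_center d v c}"
    then have c: "c \<in> S2 d" "diag_supported d c" "vanishes_on_center d v c" by simp_all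
    from in_span_Qk[OF c(1,2) center_pair_form_zero[OF c(2,3)]]
    show "c \<in> {Qk_comb lam | lam. True}" by simp
  qed
  show "{Qk_comb lam | lam. True} \<subseteq> {c \<in> S2 d. diag_supported d c \<and> vanishes_on_center d v c}"
    using Qk_comb_in_S2 Qk_comb_diag_supported Qk_comb_vanishes_on_center by auto
qed

end

theorem theorem3p7:
  fixes d :: nat and v :: "nat \<Rightarrow> 'a::linordered_field \<times> 'a"
  assumes "d \<ge> 4"
    and "convex_polygon d v"
    and "no_three_concurrent d v"
  shows "IW2 d v = {c \<in> S2 d. diag_supported d c \<and> vanishes_on_center d v c}
     \<and> IW2 d v = {(\<lambda>i j. \<Sum>k<d. lam k * Qk d v k i j) | lam. True}"
proof -
  interpret wachspress_polygon d v using assms by unfold_locales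
  show ?thesis using IW2_eq_span_Qk center_quadrics_eq_span_Qk by simp
qed

end
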